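(* The category of cubes $\overline{\square}$ generated by the maps $\delta_i^\alpha$, $\sigma_i$ and $\gamma_i$ is not shell-complete. In other terms, the inclusion $\overline{\square}\subset\widehat{\square}$ is strict.
   Context: $[0]=\{()\}$, $[n]=\{0,1\}^n$ ($n\ge1$) with the product order; ${\rm PoSet}$ is posets with strictly increasing maps. Face maps $\delta_i^\alpha:[n-1]\to[n]$ insert $\alpha\in\{0,1\}$ at position $i$. For $n\ge2$, $1\le i\le n-1$: the symmetry map $\sigma_i:[n]\to[n]$ swaps coordinates $i$ and $i+1$, and the transverse degeneracy $\gamma_i:[n]\to[n]$ is $(\epsilon_1,\dots,\epsilon_n)\mapsto(\epsilon_1,\dots,\epsilon_{i-1},\max(\epsilon_i,\epsilon_{i+1}),\min(\epsilon_i,\epsilon_{i+1}),\epsilon_{i+2},\dots,\epsilon_n)$. $\overline\square$ is the subcategory of ${\rm PoSet}$ with objects $[n]$, $n\ge0$, generated by all $\delta_i^\alpha,\sigma_i,\gamma_i$. A map is adjacency-preserving if strictly increasing and it sends pairs at Hamming distance $1$ to pairs at Hamming distance $1$; $\widehat\square$ is the category with objects $[n]$ and all adjacency-preserving maps. A category of cubes is a subcategory of ${\rm PoSet}$ with objects $[n]$ containing all face maps and consisting of adjacency-preserving maps. For such $\mathcal A$, with $\mathcal A[p]=\mathcal A(-,[p])$ and $\mathrm{cosk}_1^{\mathcal A}$ the right adjoint of truncation of presheaves on $\mathcal A$ to the full subcategory on $[0],[1]$, $\mathcal A$ is shell-complete if $\mathcal A[p]\to\mathrm{cosk}_1^{\mathcal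 A}(\mathcal A[p]_{\le1})$ is an isomorphism for all $p\ge2$. (The paper shows $\widehat\square$ is the unique shell-complete category of cubes.) *)

theory Defs
  imports "HOL-Library.FuncSet"
begin

text \<open>The poset [n] = {0,1}^n is modelled as boolean lists of length n (coordinate i of the
paper is list index i-1). A map [m] -> [n] is an extensional function on cube m, and a
category of cubes is a set of triples (m, n, f) with f : [m] -> [n].\<close>

definition cube :: "nat \<Rightarrow> bool list set" where
  "cube n = {xs. length xs = n}"

definition cle :: "bool list \<Rightarrow> bool list \<Rightarrow> bool" where
  "cle xs ys \<longleftrightarrow> length xs = length ys \<and> (\<forall>i<length xs. xs ! i \<longrightarrow> ys ! i)"

definition cless :: "bool list \<Rightarrow> bool list \<Rightarrow> bool" where
  "cless xs ys \<longleftrightarrow> cle xs ys \<and> xs \<noteq> ys"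

definition hamming :: "bool list \<Rightarrow> bool list \<Rightarrow> nat" where
  "hamming xs ys = card {i. i < length xs \<and> xs ! i \<noteq> ys ! i}"

type_synonym cmap = "nat \<times> nat \<times> (bool list \<Rightarrow> bool list)"

definition is_map :: "nat \<Rightarrow> nat \<Rightarrow> (bool list \<Rightarrow> bool list) \<Rightarrow> bool" where
  "is_map m n f \<longleftrightarrow> f \<in> cube m \<rightarrow>\<^sub>E cube n"

definition strictly_increasing :: "nat \<Rightarrow> (bool list \<Rightarrow> bool list) \<Rightarrow> bool" where
  "strictly_increasing m f \<longleftrightarrow>
     (\<forall>x\<in>cube m. \<forall>y\<in>cube m. cless x y \<longrightarrow> cless (f x) (f y))"

definition adjacency_preserving :: "nat \<Rightarrow> (bool list \<Rightarrow> bool list) \<Rightarrow> bool" where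
  "adjacency_preserving m f \<longleftrightarrow> strictly_increasing m f \<and>
     (\<forall>x\<in>cube m. \<forall>y\<in>cube m. hamming x y = 1 \<longrightarrow> hamming (f x) (f y) = 1)"

definition ccomp :: "nat \<Rightarrow> (bool list \<Rightarrow> bool list) \<Rightarrow> (bool list \<Rightarrow> bool list) \<Rightarrow> (bool list \<Rightarrow> bool list)" where
  "ccomp l g f = restrict (g \<circ> f) (cube l)"

definition cid :: "nat \<Rightarrow> (bool list \<Rightarrow> bool list)" where
  "cid n = restrict id (cube n)"

definition face :: "nat \<Rightarrow> nat \<Rightarrow> bool \<Rightarrow> (bool list \<Rightarrow> bool list)" where
  "face n i a = restrict (\<lambda>xs. take (i - 1) xs @ [a] @ drop (i - 1) xs) (cube (n - 1))"

definition sym_map :: "nat \<Rightarrow> nat \<Rightarrow> (bool list \<Rightarrow> bool list)" where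
  "sym_map n i = restrict (\<lambda>xs. xs[i - 1 := xs ! i, i := xs ! (i - 1)]) (cube n)"

definition tdeg :: "nat \<Rightarrow> nat \<Rightarrow> (bool list \<Rightarrow> bool list)" where
  "tdeg n i = restrict (\<lambda>xs. xs[i - 1 := max (xs ! (i - 1)) (xs ! i),
                                 i := min (xs ! (i - 1)) (xs ! i)]) (cube n)"

inductive_set cbar :: "cmap set" where
  idI: "(n, n, cid n) \<in> cbar"
| faceI: "1 \<le> n \<Longrightarrow> 1 \<le> i \<Longrightarrow> i \<le> n \<Longrightarrow> (n - 1, n, face n i a) \<in> cbar"
| symI: "2 \<le> n \<Longrightarrow> 1 \<le> i \<Longrightarrow> i \<le> n - 1 \<Longrightarrow> (n, n, sym_map n i) \<in> cbar"
| tdegI: "2 \<le> n \<Longrightarrow> 1 \<le> i \<Longrightarrow> i \<le> n - 1 \<Longrightarrow> (n, n, tdeg n i) \<in> cbar"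
| compI: "(l, m, f) \<in> cbar \<Longrightarrow> (m, n, g) \<in> cbar \<Longrightarrow> (l, n, ccomp l g f) \<in> cbar"

definition chat :: "cmap set" where
  "chat = {(m, n, f). is_map m n f \<and> adjacency_preserving m f}"

definition hom :: "cmap set \<Rightarrow> nat \<Rightarrow> nat \<Rightarrow> (bool list \<Rightarrow> bool list) set" where
  "hom A m n = {f. (m, n, f) \<in> A}"

text \<open>A morphism of 1-truncated presheaves A[n]_{<=1} -> A[p]_{<=1}: components
F_k : A([k],[n]) -> A([k],[p]) for k in {0,1} (encoded as F k), natural with respect to
all maps u in A([j],[k]), j,k <= 1.\<close>
definition trunc_nat :: "cmap set \<Rightarrow> nat \<Rightarrow> nat \<Rightarrow>
    (nat \<Rightarrow> (bool list \<Rightarrow> bool list) \<Rightarrow> (bool list \<Rightarrow> bool list)) \<Rightarrow> bool" where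
  "trunc_nat A n p F \<longleftrightarrow>
     (\<forall>k\<le>1. \<forall>x\<in>hom A k n. F k x \<in> hom A k p) \<and>
     (\<forall>j\<le>1. \<forall>k\<le>1. \<forall>u\<in>hom A j k. \<forall>x\<in>hom A k n.
        F j (ccomp j x u) = ccomp j (F k x) u)"

text \<open>Shell-completeness: for p >= 2 the unit A[p] -> cosk_1(A[p]_{<=1}) is an isomorphism,
i.e. for every n the map A([n],[p]) -> Hom(A[n]_{<=1}, A[p]_{<=1}), g |-> (x |-> g o x),
is a bijection.\<close>
definition shell_complete :: "cmap set \<Rightarrow> bool" where
  "shell_complete A \<longleftrightarrow> (\<forall>p\<ge>2. \<forall>n.
     (\<forall>g\<in>hom A n p. \<forall>g'\<in>hom A n p.
        (\<forall>k\<le>1. \<forall>x\<in>hom A k n. ccomp k g x = ccomp k g' x) \<longrightarrow> g = g') \<and>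
     (\<forall>F. trunc_nat A n p F \<longrightarrow>
        (\<exists>g\<in>hom A n p. \<forall>k\<le>1. \<forall>x\<in>hom A k n. F k x = ccomp k g x)))"

end

theory Submission
  imports Defs "HOL-Library.List_Lexorder" "HOL-Library.Multiset"
begin

text \<open>Every map of the category generated by faces, symmetries and transverse degeneracies
that goes from [n] to itself is a word in the \<sigma>_i and \<gamma>_i, acting coordinatewise as
a comparator network. Record, for such a map h : [4] \<rightarrow> [4], the 4 \<times> 6 boolean matrix
whose k-th row lists the k-th coordinates of h on the six vertices of weight two. A symmetry
swaps two adjacent rows and a transverse degeneracy replaces them by their pointwise max and
min, so the multiset of rows stays in an explicit finite family reachable from the identity.
The adjacency-preserving map that sends every vertex to its sorted rearrangement except that
0101, 1010, 1100 all go to 0101 has a row multiset outside that family, hence is not in the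
category. It nevertheless agrees, on every chain of length at most one, with a word map:
it differs from one word map only at 0101 and from another only at 1100, and these two
vertices are incomparable. Postcomposition with it is therefore a morphism of
1-truncations that no map of the category induces, which defeats shell-completeness.\<close>

lemma in_cube [simp]: "x \<in> cube n \<longleftrightarrow> length x = n"
  by (simp add: cube_def)

lemma cube_eq_n_lists: "cube n = set (List.n_lists n [False, True])"
  by (auto simp: set_n_lists)

definition mismatches :: "bool list \<Rightarrow> bool list \<Rightarrow> nat" where
  "mismatches x y = length (filter (\<lambda>(a, b). a \<noteq> b) (zip x y))"

lemma hamming_eq_mismatches: "length x = length y \<Longrightarrow> hamming x y = mismatches x y"
  unfolding hamming_def mismatches_def by (simp add: length_filter_conv_card cong: conj_cong)

lemma mismatches_append:
  "length p = length p' \<Longrightarrow> mismatches (p @ s) (p' @ s') = mismatches p p' + mismatches s s'"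
  by (simp add: mismatches_def)

lemma mismatches_Cons: "mismatches (a # x) (b # y) = (if a = b then 0 else 1) + mismatches x y"
  by (simp add: mismatches_def)

lemma cle_iff_list_all2: "cle x y \<longleftrightarrow> length x = length y \<and> list_all2 (\<lambda>a b. a \<longrightarrow> b) x y"
  by (auto simp: cle_def list_all2_conv_all_nth)

lemma cle_append: "length p = length p' \<Longrightarrow> cle (p @ s) (p' @ s') \<longleftrightarrow> cle p p' \<and> cle s s'"
  by (auto simp: cle_iff_list_all2 list_all2_append list_all2_lengthD)

lemma cle_Cons: "cle (a # x) (b # y) \<longleftrightarrow> (a \<longrightarrow> b) \<and> cle x y"
  by (auto simp: cle_iff_list_all2)

lemma cle_refl [simp]: "cle x x"
  by (simp add: cle_def)

lemma chat_iff:
  "(m, n, f) \<in> chat \<longleftrightarrow>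
     f \<in> extensional (cube m) \<and> (\<forall>x\<in>cube m. f x \<in> cube n) \<and>
     (\<forall>x\<in>cube m. \<forall>y\<in>cube m. cle x y \<and> x \<noteq> y \<longrightarrow> cle (f x) (f y) \<and> f x \<noteq> f y) \<and>
     (\<forall>x\<in>cube m. \<forall>y\<in>cube m. mismatches x y = 1 \<longrightarrow> mismatches (f x) (f y) = 1)"
  unfolding chat_def is_map_def adjacency_preserving_def strictly_increasing_def cless_def
  by (auto simp: PiE_iff hamming_eq_mismatches simp del: in_cube) (auto simp: hamming_eq_mismatches)

lemma ccomp_assoc:
  "\<forall>x\<in>cube l. h x \<in> cube m \<Longrightarrow> ccomp l (ccomp m g f) h = ccomp l g (ccomp l f h)"
  by (auto simp: ccomp_def simp del: in_cube)

lemma chat_ccomp: "(l, m, f) \<in> chat \<Longrightarrow> (m, n, g) \<in> chat \<Longrightarrow> (l, n, ccomp l g f) \<in> chat"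
  unfolding chat_iff by (simp add: ccomp_def del: in_cube)

lemma cid_in_chat: "(n, n, cid n) \<in> chat"
  by (auto simp: chat_iff cid_def)

subsection \<open>Generators as local maps\<close>

datatype letter = Sym nat | Tdeg nat

fun position :: "letter \<Rightarrow> nat" where
  "position (Sym i) = i"
| "position (Tdeg i) = i"

fun act :: "letter \<Rightarrow> bool list \<Rightarrow> bool list" where
  "act (Sym i) x = x[i - 1 := x ! i, i := x ! (i - 1)]"
| "act (Tdeg i) x = x[i - 1 := max (x ! (i - 1)) (x ! i), i := min (x ! (i - 1)) (x ! i)]"

fun local_act :: "letter \<Rightarrow> bool \<Rightarrow> bool \<Rightarrow> bool list" where
  "local_act (Sym i) a b = [b, a]"
| "local_act (Tdeg i) a b = [max a b, min a b]"

lemma length_act [simp]: "length (act c x) = length x"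
  by (cases c) simp_all

lemma length_foldr_act [simp]: "length (foldr act w x) = length x"
  by (induction w) simp_all

lemma act_split:
  "position c = Suc (length p) \<Longrightarrow> act c (p @ a # b # s) = p @ local_act c a b @ s"
  by (cases c) (simp_all add: list_update_append nth_append)

lemma splice_preserves_adjacency:
  assumes len: "length p = length p'" "length u = length u'" "length v = length v'"
    and mism: "mismatches u u' \<le> 1 \<Longrightarrow> mismatches v v' = mismatches u u'"
    and mono: "cle u u' \<Longrightarrow> cle v v' \<and> (v = v' \<longrightarrow> u = u')"
  shows "mismatches (p @ u @ s) (p' @ u' @ s') = 1 \<Longrightarrow> mismatches (p @ v @ s) (p' @ v' @ s') = 1"
    and "cle (p @ u @ s) (p' @ u' @ s') \<Longrightarrow> p @ u @ s \<noteq> p' @ u' @ s' \<Longrightarrow>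
           cle (p @ v @ s) (p' @ v' @ s') \<and> p @ v @ s \<noteq> p' @ v' @ s'"
  using len mism mono by (auto simp: mismatches_append cle_append)

lemma local_act_adjacent:
  "mismatches [a, b] [a', b'] \<le> 1 \<Longrightarrow>
     mismatches (local_act c a b) (local_act c a' b') = mismatches [a, b] [a', b']"
  "cle [a, b] [a', b'] \<Longrightarrow>
     cle (local_act c a b) (local_act c a' b') \<and> (local_act c a b = local_act c a' b' \<longrightarrow> [a, b] = [a', b'])"
  by (cases c; cases a; cases b; cases a'; cases b'; simp add: mismatches_Cons cle_Cons)+

lemma list_split_pair:
  assumes "1 \<le> i" "i < length x"
  obtains p a b s where "x = p @ a # b # s" "i = Suc (length p)"
proof
  show "x = take (i - 1) x @ x ! (i - 1) # x ! i # drop (i + 1) x"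
    using assms Cons_nth_drop_Suc[of "i - 1" x] Cons_nth_drop_Suc[of i x] by simp
qed (use assms in simp)

lemma act_preserves_adjacency:
  assumes c: "1 \<le> position c" "position c < length x" and "length y = length x"
  shows "mismatches x y = 1 \<Longrightarrow> mismatches (act c x) (act c y) = 1"
    and "cle x y \<Longrightarrow> x \<noteq> y \<Longrightarrow> cle (act c x) (act c y) \<and> act c x \<noteq> act c y"
proof -
  obtain p a b s where x: "x = p @ a # b # s" "position c = Suc (length p)"
    using list_split_pair[OF c] by metis
  obtain p' a' b' s' where y: "y = p' @ a' # b' # s'" "position c = Suc (length p')"
    using list_split_pair[of "position c" y] c \<open>length y = length x\<close> by metis
  have lengths: "length p = length p'" "length [a, b] = length [a', b']"
      "length (local_act c a b) = length (local_act c a' b')"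
    using x y by (cases c; simp)+
  note adj = splice_preserves_adjacency[OF lengths local_act_adjacent[of a b a' b' c]]
  show "mismatches (act c x) (act c y) = 1" if "mismatches x y = 1"
    unfolding x(1) y(1) act_split[OF x(2)] act_split[OF y(2)]
    by (rule adj(1)) (use that[unfolded x(1) y(1)] in simp_all)
  show "cle (act c x) (act c y) \<and> act c x \<noteq> act c y" if "cle x y" "x \<noteq> y"
    unfolding x(1) y(1) act_split[OF x(2)] act_split[OF y(2)]
    by (rule adj(2)) (use that[unfolded x(1) y(1)] in simp_all)
qed

lemma act_in_chat:
  assumes "1 \<le> position c" "position c < n"
  shows "(n, n, restrict (act c) (cube n)) \<in> chat"
  using assms act_preserves_adjacency[of c] by (auto simp: chat_iff)

lemma insert_preserves_adjacency:
  assumes "length x = length y"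
  shows "mismatches x y = 1 \<Longrightarrow>
           mismatches (take j x @ a # drop j x) (take j y @ a # drop j y) = 1"
    and "cle x y \<Longrightarrow> x \<noteq> y \<Longrightarrow>
           cle (take j x @ a # drop j x) (take j y @ a # drop j y) \<and>
           take j x @ a # drop j x \<noteq> take j y @ a # drop j y"
  using splice_preserves_adjacency[of "take j x" "take j y" "[]" "[]" "[a]" "[a]" "drop j x" "drop j y"]
    assms by (simp_all add: mismatches_Cons cle_Cons)

lemma face_in_chat:
  assumes "1 \<le> i" "i \<le> n"
  shows "(n - 1, n, face n i a) \<in> chat"
  using assms insert_preserves_adjacency[of _ _ "i - 1" a] by (auto simp: chat_iff face_def)

subsection \<open>Endomorphisms of the generated category are words\<close>

definition word_map :: "nat \<Rightarrow> letter list \<Rightarrow> bool list \<Rightarrow> bool list" where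
  "word_map n w = restrict (foldr act w) (cube n)"

definition valid_word :: "nat \<Rightarrow> letter list \<Rightarrow> bool" where
  "valid_word n w \<longleftrightarrow> (\<forall>c\<in>set w. 1 \<le> position c \<and> position c < n)"

lemma word_map_Nil: "word_map n [] = cid n"
  by (simp add: word_map_def cid_def)

lemma word_map_append: "word_map n (v @ w) = ccomp n (word_map n v) (word_map n w)"
  unfolding word_map_def ccomp_def by (rule ext) simp

lemma word_map_single: "word_map n [c] = restrict (act c) (cube n)"
  unfolding word_map_def by (rule ext) simp

lemma sym_map_eq_word_map: "sym_map n i = word_map n [Sym i]"
  unfolding word_map_single sym_map_def by (rule ext) simp

lemma tdeg_eq_word_map: "tdeg n i = word_map n [Tdeg i]"
  unfolding word_map_single tdeg_def by (rule ext) simp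

lemma word_map_in_cbar: "valid_word n w \<Longrightarrow> (n, n, word_map n w) \<in> cbar"
proof (induction w)
  case Nil
  show ?case by (simp add: word_map_Nil cbar.idI)
next
  case (Cons c w)
  have "(n, n, word_map n [c]) \<in> cbar"
    using Cons.prems
    by (cases c) (auto simp: valid_word_def sym_map_eq_word_map[symmetric]
        tdeg_eq_word_map[symmetric] intro: cbar.symI cbar.tdegI)
  moreover have "(n, n, word_map n w) \<in> cbar"
    using Cons by (simp add: valid_word_def)
  ultimately show ?case
    using cbar.compI word_map_append[of n "[c]" w] by fastforce
qed

lemma cbar_endo_word_map:
  "(l, m, f) \<in> cbar \<Longrightarrow> l \<le> m \<and> (l = m \<longrightarrow> (\<exists>w. valid_word m w \<and> f = word_map m w))"
proof (induction rule: cbar.induct)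
  case (idI n)
  have "valid_word n [] \<and> cid n = word_map n []"
    by (simp add: valid_word_def word_map_Nil)
  then show ?case by blast
next
  case (faceI n i a)
  then show ?case by (cases n) auto
next
  case (symI n i)
  then have "valid_word n [Sym i]" by (simp add: valid_word_def)
  then show ?case by (auto simp: sym_map_eq_word_map)
next
  case (tdegI n i)
  then have "valid_word n [Tdeg i]" by (simp add: valid_word_def)
  then show ?case by (auto simp: tdeg_eq_word_map)
next
  case (compI l m f n g)
  show ?case
  proof (intro conjI impI)
    show "l \<le> n" using compI.IH by simp
    assume "l = n"
    then have "l = m" "m = n" using compI.IH by simp_all
    then obtain v w where "valid_word n v" "g = word_map n v" "valid_word n w" "f = word_map n w"
      using compI.IH by auto
    then show "\<exists>u. valid_word n u \<and> ccomp l g f = word_map n u"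
      using \<open>l = n\<close> by (intro exI[of _ "v @ w"]) (auto simp: valid_word_def word_map_append)
  qed
qed

lemma cbar_subset_chat: "cbar \<subseteq> chat"
proof
  fix t assume "t \<in> cbar"
  then obtain l m f where "t = (l, m, f)" "(l, m, f) \<in> cbar" by (metis prod_cases3)
  moreover have "(l, m, f) \<in> cbar \<Longrightarrow> (l, m, f) \<in> chat" for l m f
  proof (induction rule: cbar.induct)
    case (symI n i)
    show ?case
      unfolding sym_map_eq_word_map word_map_single by (rule act_in_chat) (use symI in simp_all)
  next
    case (tdegI n i)
    show ?case
      unfolding tdeg_eq_word_map word_map_single by (rule act_in_chat) (use tdegI in simp_all)
  next
    case (faceI n i a)
    show ?case by (rule face_in_chat) (use faceI in simp_all)
  next
    case (idI n)
    show ?case by (rule cid_in_chat)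
  next
    case (compI l m f n g)
    show ?case using compI.IH by (rule chat_ccomp)
  qed
  ultimately show "t \<in> chat" by simp
qed

subsection \<open>The weight-two profile\<close>

definition weight_two :: "bool list list" where
  "weight_two = [[False,False,True,True], [False,True,False,True], [False,True,True,False],
                 [True,False,False,True], [True,False,True,False], [True,True,False,False]]"

definition profile :: "(bool list \<Rightarrow> bool list) \<Rightarrow> bool list list" where
  "profile h = map (\<lambda>k. map (\<lambda>e. h e ! k) weight_two) [0..<4]"

fun row_act :: "letter \<Rightarrow> bool list list \<Rightarrow> bool list list" where
  "row_act (Sym i) M = M[i - 1 := M ! i, i := M ! (i - 1)]"
| "row_act (Tdeg i) M = M[i - 1 := map2 max (M ! (i - 1)) (M ! i), i := map2 min (M ! (i - 1)) (M ! i)]"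

lemma weight_two_length: "e \<in> set weight_two \<Longrightarrow> length e = 4"
  by (auto simp: weight_two_def)

lemma profile_cong: "(\<And>e. e \<in> set weight_two \<Longrightarrow> h e = h' e) \<Longrightarrow> profile h = profile h'"
  by (simp add: profile_def)

lemma profile_act:
  assumes "1 \<le> position c" "position c < 4" and len: "\<And>e. e \<in> set weight_two \<Longrightarrow> length (h e) = 4"
  shows "profile (\<lambda>x. act c (h x)) = row_act c (profile h)"
proof (rule nth_equalityI)
  show "length (profile (\<lambda>x. act c (h x))) = length (row_act c (profile h))"
    by (cases c) (simp_all add: profile_def)
  fix k assume "k < length (profile (\<lambda>x. act c (h x)))"
  then have k: "k < 4" by (simp add: profile_def)
  show "profile (\<lambda>x. act c (h x)) ! k = row_act c (profile h) ! k"
    using assms k len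
    by (cases c) (auto simp: profile_def nth_list_update zip_map_map zip_same_conv_map
        intro!: map_cong)
qed

text \<open>The closure of the sorted profile of the identity under replacing two rows by their
pointwise max and min; membership of the identity and closedness are checked by evaluation.\<close>

definition reachable_profiles :: "bool list list list" where
  "reachable_profiles = [[[False,False,False,False,False,False],[False,False,False,False,False,False],[True,True,True,True,True,True],[True,True,True,True,True,True]],
  [[False,False,False,False,False,False],[False,False,False,False,False,True],[True,True,True,True,True,False],[True,True,True,True,True,True]],
  [[False,False,False,False,False,False],[False,False,False,False,True,False],[True,True,True,True,False,True],[True,True,True,True,True,True]],
  [[False,False,False,False,False,False],[False,False,False,False,True,True],[True,True,True,True,False,False],[True,True,True,True,True,True]],
  [[False,False,False,False,False,False],[False,False,False,True,False,False],[True,True,True,False,True,True],[True,True,True,True,True,True]],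
  [[False,False,False,False,False,False],[False,False,False,True,False,True],[True,True,True,False,True,False],[True,True,True,True,True,True]],
  [[False,False,False,False,False,False],[False,False,False,True,True,False],[True,True,True,False,False,True],[True,True,True,True,True,True]],
  [[False,False,False,False,False,False],[False,False,False,True,True,True],[True,True,True,False,False,False],[True,True,True,True,True,True]],
  [[False,False,False,False,False,False],[False,False,False,True,True,True],[True,True,True,False,False,True],[True,True,True,True,True,False]],
  [[False,False,False,False,False,False],[False,False,False,True,True,True],[True,True,True,False,True,False],[True,True,True,True,False,True]],
  [[False,False,False,False,False,False],[False,False,False,True,True,True],[True,True,True,False,True,True],[True,True,True,True,False,False]],
  [[False,False,False,False,False,False],[False,False,True,False,False,False],[True,True,False,True,True,True],[True,True,True,True,True,True]],
  [[False,False,False,False,False,False],[False,False,True,False,False,True],[True,True,False,True,True,False],[True,True,True,True,True,True]],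
  [[False,False,False,False,False,False],[False,False,True,False,True,False],[True,True,False,True,False,True],[True,True,True,True,True,True]],
  [[False,False,False,False,False,False],[False,False,True,False,True,True],[True,True,False,True,False,False],[True,True,True,True,True,True]],
  [[False,False,False,False,False,False],[False,False,True,True,False,False],[True,True,False,False,True,True],[True,True,True,True,True,True]],
  [[False,False,False,False,False,False],[False,False,True,True,False,False],[True,True,False,True,True,True],[True,True,True,False,True,True]],
  [[False,False,False,False,False,False],[False,False,True,True,True,True],[True,True,False,False,False,False],[True,True,True,True,True,True]],
  [[False,False,False,False,False,False],[False,False,True,True,True,True],[True,True,False,True,False,False],[True,True,True,False,True,True]],
  [[False,False,False,False,False,False],[False,True,False,False,False,False],[True,False,True,True,True,True],[True,True,True,True,True,True]],
  [[False,False,False,False,False,False],[False,True,False,False,False,True],[True,False,True,True,True,False],[True,True,True,True,True,True]],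
  [[False,False,False,False,False,False],[False,True,False,False,True,False],[True,False,True,True,False,True],[True,True,True,True,True,True]],
  [[False,False,False,False,False,False],[False,True,False,False,True,False],[True,False,True,True,True,True],[True,True,True,True,False,True]],
  [[False,False,False,False,False,False],[False,True,False,True,False,False],[True,False,True,False,True,True],[True,True,True,True,True,True]],
  [[False,False,False,False,False,False],[False,True,False,True,False,True],[True,False,True,False,True,False],[True,True,True,True,True,True]],
  [[False,False,False,False,False,False],[False,True,False,True,True,True],[True,False,True,False,False,False],[True,True,True,True,True,True]],
  [[False,False,False,False,False,False],[False,True,False,True,True,True],[True,False,True,False,True,False],[True,True,True,True,False,True]],
  [[False,False,False,False,False,False],[False,True,True,False,False,False],[True,False,False,True,True,True],[True,True,True,True,True,True]],
  [[False,False,False,False,False,False],[False,True,True,False,False,True],[True,False,False,True,True,False],[True,True,True,True,True,True]],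
  [[False,False,False,False,False,False],[False,True,True,False,False,True],[True,False,False,True,True,True],[True,True,True,True,True,False]],
  [[False,False,False,False,False,False],[False,True,True,False,False,True],[True,False,True,True,True,False],[True,True,False,True,True,True]],
  [[False,False,False,False,False,False],[False,True,True,False,False,True],[True,False,True,True,True,True],[True,True,False,True,True,False]],
  [[False,False,False,False,False,False],[False,True,True,False,True,True],[True,False,False,True,False,False],[True,True,True,True,True,True]],
  [[False,False,False,False,False,False],[False,True,True,False,True,True],[True,False,True,True,True,True],[True,True,False,True,False,False]],
  [[False,False,False,False,False,False],[False,True,True,True,False,True],[True,False,False,False,True,False],[True,True,True,True,True,True]],
  [[False,False,False,False,False,False],[False,True,True,True,False,True],[True,False,True,False,True,False],[True,True,False,True,True,True]],
  [[False,False,False,False,False,False],[False,True,True,True,True,False],[True,False,False,False,False,True],[True,True,True,True,True,True]],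
  [[False,False,False,False,False,False],[False,True,True,True,True,True],[True,False,False,False,False,False],[True,True,True,True,True,True]],
  [[False,False,False,False,False,False],[False,True,True,True,True,True],[True,False,False,False,False,True],[True,True,True,True,True,False]],
  [[False,False,False,False,False,False],[False,True,True,True,True,True],[True,False,True,False,True,False],[True,True,False,True,False,True]],
  [[False,False,False,False,False,False],[False,True,True,True,True,True],[True,False,True,False,True,True],[True,True,False,True,False,False]],
  [[False,False,False,False,False,True],[False,False,True,False,True,False],[True,True,False,True,False,False],[True,True,True,True,True,True]],
  [[False,False,False,False,False,True],[False,True,False,True,False,False],[True,False,True,False,True,False],[True,True,True,True,True,True]],
  [[False,False,False,False,False,True],[False,True,True,True,True,False],[True,False,False,False,False,False],[True,True,True,True,True,True]],
  [[False,False,False,False,False,True],[False,True,True,True,True,True],[True,False,False,False,False,False],[True,True,True,True,True,False]],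
  [[False,False,False,False,False,True],[False,True,True,True,True,True],[True,False,True,False,True,False],[True,True,False,True,False,False]],
  [[False,False,False,False,True,False],[False,False,True,False,False,True],[True,True,False,True,False,False],[True,True,True,True,True,True]],
  [[False,False,False,False,True,False],[False,True,False,False,False,False],[True,False,True,True,False,True],[True,True,True,True,True,True]],
  [[False,False,False,False,True,False],[False,True,False,False,False,False],[True,False,True,True,True,True],[True,True,True,True,False,True]],
  [[False,False,False,False,True,False],[False,True,True,False,False,True],[True,False,False,True,False,False],[True,True,True,True,True,True]],
  [[False,False,False,False,True,False],[False,True,True,False,False,True],[True,False,True,True,True,True],[True,True,False,True,False,False]],
  [[False,False,False,False,True,True],[False,False,True,False,False,False],[True,True,False,True,False,False],[True,True,True,True,True,True]],
  [[False,False,False,True,False,False],[False,False,True,False,False,False],[True,True,False,False,True,True],[True,True,True,True,True,True]],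
  [[False,False,False,True,False,False],[False,False,True,False,False,False],[True,True,False,True,True,True],[True,True,True,False,True,True]],
  [[False,False,False,True,False,False],[False,True,False,False,False,True],[True,False,True,False,True,False],[True,True,True,True,True,True]],
  [[False,False,False,True,False,False],[False,True,True,False,False,True],[True,False,False,False,True,False],[True,True,True,True,True,True]],
  [[False,False,False,True,False,False],[False,True,True,False,False,True],[True,False,True,False,True,False],[True,True,False,True,True,True]],
  [[False,False,False,True,False,True],[False,True,False,False,False,False],[True,False,True,False,True,False],[True,True,True,True,True,True]],
  [[False,False,False,True,True,False],[False,True,True,False,False,True],[True,False,False,False,False,False],[True,True,True,True,True,True]],
  [[False,False,False,True,True,True],[False,False,True,False,False,False],[True,True,False,False,False,False],[True,True,True,True,True,True]],
  [[False,False,False,True,True,True],[False,False,True,False,False,False],[True,True,False,True,False,False],[True,True,True,False,True,True]],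
  [[False,False,False,True,True,True],[False,True,False,False,False,False],[True,False,True,False,False,False],[True,True,True,True,True,True]],
  [[False,False,False,True,True,True],[False,True,False,False,False,False],[True,False,True,False,True,False],[True,True,True,True,False,True]],
  [[False,False,False,True,True,True],[False,True,True,False,False,False],[True,False,False,False,False,False],[True,True,True,True,True,True]],
  [[False,False,False,True,True,True],[False,True,True,False,False,True],[True,False,False,False,False,False],[True,True,True,True,True,False]],
  [[False,False,False,True,True,True],[False,True,True,False,False,True],[True,False,True,False,True,False],[True,True,False,True,False,False]]]"

lemma reachable_profiles_closed:
  "\<forall>r\<in>set reachable_profiles. \<forall>a\<in>set r. \<forall>b\<in>set (remove1 a r).
     sort (map2 max a b # map2 min a b # remove1 b (remove1 a r)) \<in> set reachable_profiles"
  by code_simp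

lemma sort_row_act_reachable:
  assumes r: "sort M \<in> set reachable_profiles" and "length M = 4"
    and c: "1 \<le> position c" "position c < 4"
  shows "sort (row_act c M) \<in> set reachable_profiles"
proof (cases c)
  case (Sym i)
  then have "mset (row_act c M) = mset M"
    using c \<open>length M = 4\<close> mset_swap[of i M "i - 1"] by simp
  then show ?thesis using r by (metis sorted_list_of_multiset_mset)
next
  case (Tdeg i)
  have "1 \<le> i" "i < length M" using c Tdeg \<open>length M = 4\<close> by simp_all
  then obtain p A B s where M: "M = p @ A # B # s" "i = Suc (length p)"
    by (rule list_split_pair)
  let ?r = "sort M"
  have A: "A \<in> set ?r" using M by simp
  have AB: "mset (remove1 A ?r) = add_mset B (mset p + mset s)"
    using M by simp
  then have B: "B \<in> set (remove1 A ?r)"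
    by (metis set_mset_mset union_single_eq_member)
  have rest: "mset (remove1 B (remove1 A ?r)) = mset p + mset s"
    using AB by simp
  have "mset (row_act c M) = mset (map2 max A B # map2 min A B # remove1 B (remove1 A ?r))"
    using M Tdeg rest by (simp add: list_update_append nth_append)
  then show ?thesis
    using reachable_profiles_closed r A B by (metis sorted_list_of_multiset_mset)
qed

lemma word_profile_reachable:
  "valid_word 4 w \<Longrightarrow> sort (profile (foldr act w)) \<in> set reachable_profiles"
proof (induction w)
  case Nil
  show ?case by code_simp
next
  case (Cons c w)
  then have c: "1 \<le> position c" "position c < 4" and "valid_word 4 w"
    by (simp_all add: valid_word_def)
  have "profile (foldr act (c # w)) = row_act c (profile (foldr act w))"
    using profile_act[OF c, of "foldr act w"] weight_two_length by (simp add: comp_def)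
  then show ?case
    using sort_row_act_reachable[OF Cons.IH[OF \<open>valid_word 4 w\<close>] _ c]
    by (simp add: profile_def)
qed

subsection \<open>The exotic map\<close>

definition exotic_fun :: "bool list \<Rightarrow> bool list" where
  "exotic_fun x =
     (if x \<in> set [[False,True,False,True], [True,False,True,False], [True,True,False,False]]
      then [False,True,False,True] else sort x)"

definition exotic :: "bool list \<Rightarrow> bool list" where
  "exotic = restrict exotic_fun (cube 4)"

lemma exotic_in_chat: "(4, 4, exotic) \<in> chat"
proof -
  have "\<forall>x\<in>cube 4. \<forall>y\<in>cube 4.
      (length x = length y \<and> list_all2 (\<lambda>a b. a \<longrightarrow> b) x y \<and> x \<noteq> y \<longrightarrow>
         length (exotic_fun x) = length (exotic_fun y) \<and>
         list_all2 (\<lambda>a b. a \<longrightarrow> b) (exotic_fun x) (exotic_fun y) \<and> exotic_fun x \<noteq> exotic_fun y) \<and>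
      (mismatches x y = 1 \<longrightarrow> mismatches (exotic_fun x) (exotic_fun y) = 1) \<and>
      length (exotic_fun x) = 4"
    unfolding cube_eq_n_lists by code_simp
  then show ?thesis
    unfolding chat_iff cle_iff_list_all2 exotic_def by auto
qed

lemma exotic_not_in_cbar: "(4, 4, exotic) \<notin> cbar"
proof
  assume "(4, 4, exotic) \<in> cbar"
  then obtain w where "valid_word 4 w" and w: "exotic = word_map 4 w"
    using cbar_endo_word_map by blast
  have "profile exotic_fun = profile (foldr act w)"
  proof (rule profile_cong)
    fix e assume "e \<in> set weight_two"
    then show "exotic_fun e = foldr act w e"
      using fun_cong[OF w, of e] weight_two_length by (simp add: exotic_def word_map_def)
  qed
  moreover have "sort (profile exotic_fun) \<notin> set reachable_profiles"
    by code_simp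
  ultimately show False
    using word_profile_reachable[OF \<open>valid_word 4 w\<close>] by simp
qed

lemma cube_four:
  "cube 4 = set [[False,False,False,False], [True,False,False,False], [False,True,False,False],
    [True,True,False,False], [False,False,True,False], [True,False,True,False],
    [False,True,True,False], [True,True,True,False], [False,False,False,True],
    [True,False,False,True], [False,True,False,True], [True,True,False,True],
    [False,False,True,True], [True,False,True,True], [False,True,True,True], [True,True,True,True]]"
  unfolding cube_eq_n_lists by (simp add: numeral_eq_Suc)

text \<open>Sym i after Tdeg i is the comparator sorting coordinates i and i+1 upwards; the two
words below are comparator networks.\<close>

definition word_off_0101 :: "letter list" where
  "word_off_0101 = [Sym 1, Tdeg 1, Sym 2, Tdeg 2, Sym 3, Tdeg 3, Sym 2, Sym 1, Tdeg 1, Tdeg 2]"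

definition word_off_1100 :: "letter list" where
  "word_off_1100 = [Sym 3, Tdeg 3, Sym 1, Tdeg 1, Sym 2, Sym 3, Tdeg 3, Sym 1, Tdeg 1, Sym 2]"

lemma exotic_eq_word_off_0101:
  "x \<in> cube 4 \<Longrightarrow> x \<noteq> [False,True,False,True] \<Longrightarrow> exotic x = word_map 4 word_off_0101 x"
proof -
  have "\<forall>x\<in>cube 4. x \<noteq> [False,True,False,True] \<longrightarrow> exotic_fun x = foldr act word_off_0101 x"
    unfolding cube_four by (simp only: list.set ball_simps) (simp add: exotic_fun_def word_off_0101_def)
  then show "x \<in> cube 4 \<Longrightarrow> x \<noteq> [False,True,False,True] \<Longrightarrow> exotic x = word_map 4 word_off_0101 x"
    by (simp add: exotic_def word_map_def)
qed

lemma exotic_eq_word_off_1100: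
  "x \<in> cube 4 \<Longrightarrow> x \<noteq> [True,True,False,False] \<Longrightarrow> exotic x = word_map 4 word_off_1100 x"
proof -
  have "\<forall>x\<in>cube 4. x \<noteq> [True,True,False,False] \<longrightarrow> exotic_fun x = foldr act word_off_1100 x"
    unfolding cube_four by (simp only: list.set ball_simps) (simp add: exotic_fun_def word_off_1100_def)
  then show "x \<in> cube 4 \<Longrightarrow> x \<noteq> [True,True,False,False] \<Longrightarrow> exotic x = word_map 4 word_off_1100 x"
    by (simp add: exotic_def word_map_def)
qed

subsection \<open>Failure of shell-completeness\<close>

definition point :: "bool list \<Rightarrow> bool list \<Rightarrow> bool list" where
  "point v = restrict (\<lambda>_. v) (cube 0)"

lemma point_in_cbar: "v \<in> cube n \<Longrightarrow> (0, n, point v) \<in> cbar"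
proof (induction v arbitrary: n)
  case Nil
  then have "point [] = cid n"
    by (auto simp: point_def cid_def)
  then show ?case using Nil cbar.idI by simp
next
  case (Cons a v)
  then obtain m where n: "n = Suc m" and v: "v \<in> cube m" by (cases n) auto
  have "ccomp 0 (face (Suc m) 1 a) (point v) = point (a # v)"
    using v by (auto simp: ccomp_def point_def face_def)
  then show ?case
    using cbar.compI[OF Cons.IH[OF v] cbar.faceI[of "Suc m" 1 a, simplified]] n by simp
qed

lemma ccomp_point: "ccomp 0 g (point v) [] = g v"
  by (simp add: point_def ccomp_def)

lemma cbar_maps_determined_by_points:
  assumes "f \<in> extensional (cube n)" "g \<in> extensional (cube n)"
    and "\<forall>x\<in>hom cbar 0 n. ccomp 0 f x = ccomp 0 g x"
  shows "f = g"
proof (rule extensionalityI[OF assms(1,2)])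
  fix v assume "v \<in> cube n"
  then have "ccomp 0 f (point v) = ccomp 0 g (point v)"
    using assms(3) by (simp add: hom_def point_in_cbar)
  then show "f v = g v" by (metis ccomp_point)
qed

lemma chat_low_dim_chain:
  assumes x: "(k, n, x) \<in> chat" and "k \<le> 1" "y \<in> cube k" "y' \<in> cube k"
  shows "cle (x y) (x y') \<or> cle (x y') (x y)"
proof -
  have mono: "cle (x u) (x v)" if "u \<in> cube k" "v \<in> cube k" "cle u v" "u \<noteq> v" for u v
    using x that unfolding chat_iff by blast
  have "(y = [] \<and> y' = []) \<or> (\<exists>a b. y = [a] \<and> y' = [b])"
    using assms(2-4) by (cases y; cases y') (auto simp: le_Suc_eq)
  then have "cle y y' \<or> cle y' y"
    by (auto simp: cle_def)
  then show ?thesis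
    using mono assms(3,4) by (cases "y = y'") auto
qed

lemma exotic_ccomp_in_cbar:
  assumes "k \<le> 1" and x: "(k, 4, x) \<in> cbar"
  shows "(k, 4, ccomp k exotic x) \<in> cbar"
proof -
  have xc: "(k, 4, x) \<in> chat" using x cbar_subset_chat by blast
  then have x_cube: "\<forall>y\<in>cube k. x y \<in> cube 4" by (simp add: chat_iff)
  obtain w where "valid_word 4 w" and agree: "\<forall>y\<in>cube k. exotic (x y) = word_map 4 w (x y)"
  proof (cases "\<exists>y0\<in>cube k. x y0 = [False,True,False,True]")
    case False
    have "valid_word 4 word_off_0101" by (simp add: valid_word_def word_off_0101_def)
    moreover have "\<forall>y\<in>cube k. exotic (x y) = word_map 4 word_off_0101 (x y)"
      using False x_cube exotic_eq_word_off_0101 by blast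
    ultimately show ?thesis using that by blast
  next
    case True
    then obtain y0 where y0: "y0 \<in> cube k" "x y0 = [False,True,False,True]" by blast
    have "x y \<noteq> [True,True,False,False]" if "y \<in> cube k" for y
      using chat_low_dim_chain[OF xc \<open>k \<le> 1\<close> that y0(1)] y0(2) by (auto simp: cle_Cons)
    then have "\<forall>y\<in>cube k. exotic (x y) = word_map 4 word_off_1100 (x y)"
      using x_cube exotic_eq_word_off_1100 by blast
    moreover have "valid_word 4 word_off_1100" by (simp add: valid_word_def word_off_1100_def)
    ultimately show ?thesis using that by blast
  qed
  have "ccomp k exotic x = ccomp k (word_map 4 w) x"
    unfolding ccomp_def by (rule restrict_ext) (use agree in simp)
  then show ?thesis
    using cbar.compI[OF x word_map_in_cbar[OF \<open>valid_word 4 w\<close>]] by simp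
qed

lemma exotic_trunc_nat: "trunc_nat cbar 4 4 (\<lambda>k x. ccomp k exotic x)"
  unfolding trunc_nat_def
proof (intro conjI allI impI ballI)
  fix k x assume "k \<le> (1::nat)" "x \<in> hom cbar k 4"
  then show "ccomp k exotic x \<in> hom cbar k 4"
    using exotic_ccomp_in_cbar by (simp add: hom_def)
next
  fix j k u x assume "u \<in> hom cbar j k"
  then have "\<forall>y\<in>cube j. u y \<in> cube k"
    using cbar_subset_chat by (auto simp: hom_def chat_iff)
  then show "ccomp j exotic (ccomp j x u) = ccomp j (ccomp k exotic x) u"
    by (simp add: ccomp_assoc)
qed

lemma shell_complete_extends:
  "shell_complete A \<Longrightarrow> 2 \<le> p \<Longrightarrow> trunc_nat A n p F \<Longrightarrow>
     \<exists>g\<in>hom A n p. \<forall>k\<le>1. \<forall>x\<in>hom A k n. F k x = ccomp k g x"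
  unfolding shell_complete_def by blast

theorem theorem7p16:
  shows "\<not> shell_complete cbar \<and> cbar \<subset> chat"
proof
  have "cbar \<noteq> chat" using exotic_in_chat exotic_not_in_cbar by blast
  with cbar_subset_chat show "cbar \<subset> chat" by (rule psubsetI)
  show "\<not> shell_complete cbar"
  proof
    assume "shell_complete cbar"
    then obtain g where g: "g \<in> hom cbar 4 4"
      and induced: "\<forall>k\<le>1. \<forall>x\<in>hom cbar k 4. ccomp k exotic x = ccomp k g x"
      using shell_complete_extends[OF _ _ exotic_trunc_nat] by auto
    have "exotic = g"
    proof (rule cbar_maps_determined_by_points)
      show "exotic \<in> extensional (cube 4)" by (simp add: exotic_def)
      show "g \<in> extensional (cube 4)"
        using g cbar_subset_chat by (auto simp: hom_def chat_iff)
      show "\<forall>x\<in>hom cbar 0 4. ccomp 0 exotic x = ccomp 0 g x"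
        using induced by simp
    qed
    then show False using g exotic_not_in_cbar by (simp add: hom_def)
  qed
qed

end
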